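(* Let $G=(V,E)$ be a finite, undirected, connected graph with unit edge weights and vertex set $V=\{v_1,\dots,v_N\}$, let $L=D-A$ be its graph Laplacian, and let $\phi_{\lambda_1},\dots,\phi_{\lambda_N}$ be an orthonormal basis of $\mathbb{C}^N$ of eigenvectors of $L$ (with eigenvalues $\lambda_1,\dots,\lambda_N$). For $t\ge 0$ let $H_t=e^{-tL}$, and define the graph short-time Fourier transform $V_t:\mathbb{C}^N\to\mathbb{C}^{N\times N}$ by $$(V_tf)(v_i,\lambda_j)=\sum_{k=1}^N f(v_k)\,H_t(v_i,v_k)\,\overline{\phi_{\lambda_j}(v_k)}.$$ Define $W_t:\mathbb{C}^{N\times N}\to\mathbb{C}^N$ by $$(W_tF)(v_i)=\frac{1}{\|H_t(\cdot,v_i)\|^2}\sum_{j=1}^N\phi_{\lambda_j}(v_i)\Big[\sum_{k=1}^N F(v_k,\lambda_j)\,H_t(v_k,v_i)\Big].$$ Then $W_t$ is a left inverse of $V_t$, i.e. $W_tV_tf=f$ for all $f\in\mathbb{C}^N$.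
   Context: The graph Laplacian acts by $Lf(v)=\sum_{u\sim v}(f(v)-f(u))$; in matrix form $L=D-A$ with $A$ the adjacency matrix and $D$ the diagonal degree matrix. Vectors in $\mathbb{C}^N$ are functions on $V$; $\phi_{\lambda_j}(v_k)$ is the $v_k$-entry of $\phi_{\lambda_j}$; $H_t(v_i,v_k)$ is the $(i,k)$ entry of $H_t$ and $H_t(\cdot,v_i)$ its $i$-th column. Elements $F\in\mathbb{C}^{N\times N}$ are indexed as $F(v_k,\lambda_j)$, $k,j\in\{1,\dots,N\}$. *)

theory Defs
  imports "HOL-Analysis.Analysis"
begin

text \<open>Vertices are the elements of a finite type 'n (so N = CARD('n)); the eigenvalue
  index j also ranges over 'n. Matrices are complex^'n^'n with M $ i $ k the (i,k) entry.\<close>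

definition simple_graph :: "('n::finite \<Rightarrow> 'n \<Rightarrow> bool) \<Rightarrow> bool" where
  "simple_graph E \<longleftrightarrow> (\<forall>u v. E u v \<longrightarrow> E v u) \<and> (\<forall>u. \<not> E u u)"

definition connected_graph :: "('n::finite \<Rightarrow> 'n \<Rightarrow> bool) \<Rightarrow> bool" where
  "connected_graph E \<longleftrightarrow> (\<forall>u v. E\<^sup>*\<^sup>* u v)"

definition adj_matrix :: "('n::finite \<Rightarrow> 'n \<Rightarrow> bool) \<Rightarrow> complex^'n^'n" where
  "adj_matrix E = (\<chi> i k. if E i k then 1 else 0)"

definition deg_matrix :: "('n::finite \<Rightarrow> 'n \<Rightarrow> bool) \<Rightarrow> complex^'n^'n" where
  "deg_matrix E = (\<chi> i k. if i = k then of_nat (card {u. E i u}) else 0)"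

definition laplacian :: "('n::finite \<Rightarrow> 'n \<Rightarrow> bool) \<Rightarrow> complex^'n^'n" where
  "laplacian E = deg_matrix E - adj_matrix E"

fun mat_pow :: "complex^'n^'n \<Rightarrow> nat \<Rightarrow> complex^'n^'n" where
  "mat_pow M 0 = mat 1"
| "mat_pow M (Suc m) = M ** mat_pow M m"

definition mat_exp :: "complex^'n^'n \<Rightarrow> complex^'n^'n" where
  "mat_exp M = (\<Sum>m. (1 / fact m) *\<^sub>R mat_pow M m)"

definition heat_kernel :: "('n::finite \<Rightarrow> 'n \<Rightarrow> bool) \<Rightarrow> real \<Rightarrow> complex^'n^'n" where
  "heat_kernel E t = mat_exp ((- t) *\<^sub>R laplacian E)"

text \<open>Graph short-time Fourier transform; phi j is the j-th eigenvector, F $ k $ j = F(v_k, lambda_j).\<close>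
definition gSTFT :: "('n::finite \<Rightarrow> 'n \<Rightarrow> bool) \<Rightarrow> ('n \<Rightarrow> complex^'n) \<Rightarrow> real
    \<Rightarrow> complex^'n \<Rightarrow> complex^'n^'n" where
  "gSTFT E phi t f = (let H = heat_kernel E t in
     (\<chi> i j. \<Sum>k\<in>UNIV. f $ k * H $ i $ k * cnj (phi j $ k)))"

definition gW :: "('n::finite \<Rightarrow> 'n \<Rightarrow> bool) \<Rightarrow> ('n \<Rightarrow> complex^'n) \<Rightarrow> real
    \<Rightarrow> complex^'n^'n \<Rightarrow> complex^'n" where
  "gW E phi t F = (let H = heat_kernel E t in
     (\<chi> i. (1 / complex_of_real ((\<Sum>k\<in>UNIV. (cmod (H $ k $ i))\<^sup>2))) *
        (\<Sum>j\<in>UNIV. phi j $ i * (\<Sum>k\<in>UNIV. F $ k $ j * H $ k $ i))))"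

end

theory Submission
  imports Defs
begin

text \<open>Completeness of the orthonormal eigenbasis,
  \<open>\<Sum>\<^sub>j \<phi>\<^sub>j(v\<^sub>i) conj(\<phi>\<^sub>j(v\<^sub>m)) = \<delta>\<^sub>i\<^sub>m\<close>, collapses the sum over eigenvalues in
  \<open>(W\<^sub>t V\<^sub>t f)(v\<^sub>i)\<close> to \<open>f(v\<^sub>i) \<Sum>\<^sub>k H\<^sub>t(v\<^sub>k,v\<^sub>i)\<^sup>2\<close>. As \<open>L\<close> is real, so is
  \<open>H\<^sub>t = exp(-tL)\<close>, hence this sum is \<open>\<parallel>H\<^sub>t(\<cdot>,v\<^sub>i)\<parallel>\<^sup>2\<close>. That column is nonzero because
  \<open>H\<^sub>t\<close> scales each eigenvector \<open>\<phi>\<^sub>j\<close> by \<open>exp(-t\<lambda>\<^sub>j) \<noteq> 0\<close>.\<close>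

lemma bounded_linear_matrix_vector_mult_left:
  fixes v :: "complex^'n::finite"
  shows "bounded_linear (\<lambda>A::complex^'n^'m::finite. A *v v)"
  by (rule linear_conv_bounded_linear[THEN iffD1], rule linearI)
     (simp_all add: vec_eq_iff matrix_vector_mult_def scaleR_sum_right distrib_right sum.distrib)

lemma scaleR_matrix_vector_mult:
  fixes A :: "complex^'n::finite^'m::finite"
  shows "(c *\<^sub>R A) *v v = c *\<^sub>R (A *v v)"
  by (simp add: vec_eq_iff matrix_vector_mult_def scaleR_sum_right)

lemma norm_le_sum_norm_entries:
  fixes A :: "complex^'n::finite^'m::finite"
  shows "norm A \<le> (\<Sum>i\<in>UNIV. \<Sum>k\<in>UNIV. norm (A $ i $ k))"
proof -
  have "norm A \<le> (\<Sum>i\<in>UNIV. norm (A $ i))"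
    unfolding norm_vec_def by (rule L2_set_le_sum) auto
  also have "\<dots> \<le> (\<Sum>i\<in>UNIV. \<Sum>k\<in>UNIV. norm (A $ i $ k))"
    by (intro sum_mono) (unfold norm_vec_def, rule L2_set_le_sum, auto)
  finally show ?thesis .
qed

lemma norm_mat_pow_entry_le:
  fixes M :: "complex^'n::finite^'n"
  shows "norm (mat_pow M m $ i $ k) \<le> (\<Sum>i\<in>UNIV. \<Sum>l\<in>UNIV. norm (M $ i $ l)) ^ m"
proof (induction m arbitrary: i k)
  case 0
  then show ?case by (simp add: mat_def)
next
  case (Suc m)
  define s where "s = (\<Sum>i\<in>UNIV. \<Sum>l\<in>UNIV. norm (M $ i $ l))"
  have row_le: "(\<Sum>l\<in>UNIV. norm (M $ i $ l)) \<le> s"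
    unfolding s_def by (rule member_le_sum) (auto intro: sum_nonneg)
  have "norm (mat_pow M (Suc m) $ i $ k) = norm (\<Sum>l\<in>UNIV. M $ i $ l * mat_pow M m $ l $ k)"
    by (simp add: matrix_matrix_mult_def)
  also have "\<dots> \<le> (\<Sum>l\<in>UNIV. norm (M $ i $ l) * s ^ m)"
    by (rule order_trans[OF norm_sum sum_mono])
       (auto simp: norm_mult s_def intro: mult_left_mono Suc.IH)
  also have "\<dots> = (\<Sum>l\<in>UNIV. norm (M $ i $ l)) * s ^ m"
    by (simp add: sum_distrib_right)
  also have "\<dots> \<le> s * s ^ m"
    using row_le by (rule mult_right_mono) (simp add: s_def sum_nonneg)
  finally show ?case by (simp add: s_def)
qed

lemma sums_mat_exp:
  fixes M :: "complex^'n::finite^'n"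
  shows "(\<lambda>m. (1 / fact m) *\<^sub>R mat_pow M m) sums mat_exp M"
proof -
  define s where "s = (\<Sum>i\<in>UNIV. \<Sum>l\<in>UNIV. norm (M $ i $ l))"
  have "norm ((1 / fact m) *\<^sub>R mat_pow M m) \<le> CARD('n) * CARD('n) * (s ^ m /\<^sub>R fact m)" for m
  proof -
    have "norm (mat_pow M m) \<le> (\<Sum>i\<in>(UNIV::'n set). \<Sum>k\<in>(UNIV::'n set). s ^ m)"
      by (rule order_trans[OF norm_le_sum_norm_entries])
         (intro sum_mono, unfold s_def, rule norm_mat_pow_entry_le)
    then show ?thesis by (simp add: field_simps)
  qed
  then have "summable (\<lambda>m. (1 / fact m) *\<^sub>R mat_pow M m)"
    by (intro summable_comparison_test[OF _ summable_mult[OF summable_exp_generic]]) auto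
  then show ?thesis
    unfolding mat_exp_def by (rule summable_sums)
qed

lemma Im_mat_pow_eq_0:
  fixes M :: "complex^'n::finite^'n"
  assumes "\<And>i k. Im (M $ i $ k) = 0"
  shows "Im (mat_pow M m $ i $ k) = 0"
  using assms
  by (induction m arbitrary: i k) (auto simp: mat_def matrix_matrix_mult_def Im_sum intro!: sum.neutral)

lemma Im_mat_exp_eq_0:
  fixes M :: "complex^'n::finite^'n"
  assumes "\<And>i k. Im (M $ i $ k) = 0"
  shows "Im (mat_exp M $ i $ k) = 0"
proof -
  have "bounded_linear (\<lambda>A::complex^'n^'n. Im (A $ i $ k))"
    by (intro bounded_linear_compose[OF bounded_linear_Im]
          bounded_linear_compose[OF bounded_linear_vec_nth] bounded_linear_vec_nth)
  from bounded_linear.sums[OF this sums_mat_exp[of M]]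
  have "(\<lambda>m. 0) sums Im (mat_exp M $ i $ k)"
    by (simp add: Im_mat_pow_eq_0[OF assms])
  then show ?thesis
    using sums_unique2 sums_zero by blast
qed

lemma mat_pow_eigenvector:
  fixes M :: "complex^'n::finite^'n"
  assumes "M *v v = \<mu> *s v"
  shows "mat_pow M m *v v = \<mu> ^ m *s v"
proof (induction m)
  case 0
  then show ?case by simp
next
  case (Suc m)
  have "mat_pow M (Suc m) *v v = M *v (\<mu> ^ m *s v)"
    by (simp add: matrix_vector_mul_assoc[symmetric] Suc)
  also have "\<dots> = \<mu> ^ m *s (M *v v)"
    by (simp add: vec_eq_iff matrix_vector_mult_def sum_distrib_left algebra_simps)
  finally show ?case
    using assms by (simp add: vec_eq_iff algebra_simps)
qed

lemma mat_exp_eigenvector: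
  fixes M :: "complex^'n::finite^'n"
  assumes "M *v v = \<mu> *s v"
  shows "mat_exp M *v v = exp \<mu> *s v"
proof -
  have "(\<lambda>m. ((1 / fact m) *\<^sub>R mat_pow M m) *v v) sums (mat_exp M *v v)"
    by (rule bounded_linear.sums[OF bounded_linear_matrix_vector_mult_left sums_mat_exp])
  moreover have "((1 / fact m) *\<^sub>R mat_pow M m) *v v = (\<mu> ^ m /\<^sub>R fact m) *s v" for m
    by (simp add: scaleR_matrix_vector_mult mat_pow_eigenvector[OF assms] vec_eq_iff divide_inverse)
  moreover have "(\<lambda>m. (\<mu> ^ m /\<^sub>R fact m) *s v) sums (exp \<mu> *s v)"
    by (rule bounded_linear.sums[OF _ exp_converges], rule linear_conv_bounded_linear[THEN iffD1],
        rule linearI) (simp_all add: vec_eq_iff algebra_simps)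
  ultimately show ?thesis
    using sums_unique2 by simp
qed

definition orthonormal_basis :: "('n::finite \<Rightarrow> complex^'n) \<Rightarrow> bool" where
  "orthonormal_basis phi \<longleftrightarrow>
     (\<forall>j j'. (\<Sum>k\<in>UNIV. phi j $ k * cnj (phi j' $ k)) = (if j = j' then 1 else 0))"

lemma orthonormal_basisD:
  "orthonormal_basis phi \<Longrightarrow>
    (\<Sum>k\<in>UNIV. phi j $ k * cnj (phi j' $ k)) = (if j = j' then 1 else 0)"
  by (simp add: orthonormal_basis_def)

lemma orthonormal_basis_complete:
  fixes phi :: "'n::finite \<Rightarrow> complex^'n"
  assumes "orthonormal_basis phi"
  shows "(\<Sum>j\<in>UNIV. phi j $ i * cnj (phi j $ m)) = (if i = m then 1 else 0)"
proof -
  define P :: "complex^'n^'n" where "P = (\<chi> j k. phi j $ k)"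
  define Q :: "complex^'n^'n" where "Q = (\<chi> k j. cnj (phi j $ k))"
  have "P ** Q = mat 1"
    using assms by (simp add: orthonormal_basis_def P_def Q_def vec_eq_iff matrix_matrix_mult_def mat_def)
  then have "Q ** P = mat 1"
    using matrix_left_right_inverse by blast
  then have "(Q ** P) $ m $ i = mat 1 $ m $ i"
    by simp
  then show ?thesis
    by (simp add: P_def Q_def matrix_matrix_mult_def mat_def mult.commute)
qed

lemma spectral_decomposition_entry:
  assumes "orthonormal_basis phi" and "\<And>j. A *v phi j = e j *s phi j"
  shows "A $ k $ i = (\<Sum>j\<in>UNIV. e j * phi j $ k * cnj (phi j $ i))"
proof -
  have "A $ k $ i = (\<Sum>l\<in>UNIV. A $ k $ l * (\<Sum>j\<in>UNIV. phi j $ l * cnj (phi j $ i)))"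
    by (simp add: orthonormal_basis_complete[OF assms(1)] if_distrib cong: if_cong)
  also have "\<dots> = (\<Sum>l\<in>UNIV. \<Sum>j\<in>UNIV. A $ k $ l * (phi j $ l * cnj (phi j $ i)))"
    by (simp add: sum_distrib_left)
  also have "\<dots> = (\<Sum>j\<in>UNIV. \<Sum>l\<in>UNIV. A $ k $ l * (phi j $ l * cnj (phi j $ i)))"
    by (rule sum.swap)
  also have "\<dots> = (\<Sum>j\<in>UNIV. cnj (phi j $ i) * (A *v phi j) $ k)"
    by (simp add: matrix_vector_mult_def sum_distrib_left mult_ac)
  also have "\<dots> = (\<Sum>j\<in>UNIV. e j * phi j $ k * cnj (phi j $ i))"
    by (simp add: assms(2) algebra_simps)
  finally show ?thesis .
qed

lemma column_nonzero_if_eigenvalues_nonzero: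
  assumes "orthonormal_basis phi" and "\<And>j. A *v phi j = e j *s phi j" and "\<And>j. e j \<noteq> 0"
  shows "column i A \<noteq> 0"
proof
  assume "column i A = 0"
  then have column_zero: "A $ k $ i = 0" for k
    by (simp add: column_def vec_eq_iff)
  have "phi j' $ i = 0" for j'
  proof -
    have "0 = (\<Sum>k\<in>UNIV. A $ k $ i * cnj (phi j' $ k))"
      by (simp add: column_zero)
    also have "\<dots> = (\<Sum>k\<in>UNIV. \<Sum>j\<in>UNIV. e j * phi j $ k * cnj (phi j $ i) * cnj (phi j' $ k))"
      by (simp add: spectral_decomposition_entry[OF assms(1,2)] sum_distrib_right)
    also have "\<dots> = (\<Sum>j\<in>UNIV. \<Sum>k\<in>UNIV. e j * phi j $ k * cnj (phi j $ i) * cnj (phi j' $ k))"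
      by (rule sum.swap)
    also have "\<dots> = (\<Sum>j\<in>UNIV. e j * cnj (phi j $ i) * (\<Sum>k\<in>UNIV. phi j $ k * cnj (phi j' $ k)))"
      by (simp add: sum_distrib_left mult_ac)
    also have "\<dots> = e j' * cnj (phi j' $ i)"
      by (simp add: orthonormal_basisD[OF assms(1)] if_distrib cong: if_cong)
    finally show ?thesis
      using assms(3) by simp
  qed
  then show False
    using orthonormal_basis_complete[OF assms(1), of i i] by simp
qed

lemma Im_heat_kernel_eq_0: "Im (heat_kernel E t $ i $ k) = 0"
  unfolding heat_kernel_def
  by (rule Im_mat_exp_eq_0) (simp add: laplacian_def deg_matrix_def adj_matrix_def)

lemma heat_kernel_eigenvector:
  assumes "laplacian E *v v = \<mu> *s v"
  shows "heat_kernel E t *v v = exp (- of_real t * \<mu>) *s v"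
proof -
  have "((- t) *\<^sub>R laplacian E) *v v = (- of_real t * \<mu>) *s v"
    unfolding scaleR_matrix_vector_mult assms by (simp add: vec_eq_iff) (simp add: scaleR_conv_of_real)
  then show ?thesis
    unfolding heat_kernel_def by (rule mat_exp_eigenvector)
qed

lemma windowed_transform_inversion:
  fixes H :: "complex^'n::finite^'n" and f :: "complex^'n"
  assumes "orthonormal_basis phi" and "\<And>k l. Im (H $ k $ l) = 0" and "column i H \<noteq> 0"
  shows "(1 / complex_of_real (\<Sum>k\<in>UNIV. (cmod (H $ k $ i))\<^sup>2)) *
      (\<Sum>j\<in>UNIV. phi j $ i * (\<Sum>k\<in>UNIV. (\<Sum>m\<in>UNIV. f $ m * H $ k $ m * cnj (phi j $ m)) * H $ k $ i))
    = f $ i"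
proof -
  define c where "c = (\<Sum>k\<in>UNIV. (cmod (H $ k $ i))\<^sup>2)"
  have "c = (norm (column i H))\<^sup>2"
    by (simp add: c_def power2_norm_eq_inner inner_vec_def column_def)
  with assms(3) have "c \<noteq> 0"
    by simp
  \<comment> \<open>Realness of \<open>H\<close> is used only here.\<close>
  have square_eq: "H $ k $ i * H $ k $ i = complex_of_real ((cmod (H $ k $ i))\<^sup>2)" for k
    using assms(2)[of k i] by (simp add: cmod_def complex_eq_iff power2_eq_square)
  have "(\<Sum>j\<in>UNIV. phi j $ i * (\<Sum>k\<in>UNIV. (\<Sum>m\<in>UNIV. f $ m * H $ k $ m * cnj (phi j $ m)) * H $ k $ i))
      = (\<Sum>j\<in>UNIV. \<Sum>k\<in>UNIV. \<Sum>m\<in>UNIV. phi j $ i * f $ m * H $ k $ m * cnj (phi j $ m) * H $ k $ i)"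
    by (simp add: sum_distrib_left sum_distrib_right mult.assoc)
  also have "\<dots> = (\<Sum>k\<in>UNIV. \<Sum>j\<in>UNIV. \<Sum>m\<in>UNIV. phi j $ i * f $ m * H $ k $ m * cnj (phi j $ m) * H $ k $ i)"
    by (rule sum.swap)
  also have "\<dots> = (\<Sum>k\<in>UNIV. \<Sum>m\<in>UNIV. \<Sum>j\<in>UNIV. phi j $ i * f $ m * H $ k $ m * cnj (phi j $ m) * H $ k $ i)"
    by (rule sum.cong[OF refl], rule sum.swap)
  also have "\<dots> = (\<Sum>k\<in>UNIV. \<Sum>m\<in>UNIV. f $ m * H $ k $ m * H $ k $ i * (\<Sum>j\<in>UNIV. phi j $ i * cnj (phi j $ m)))"
    by (simp add: sum_distrib_left mult_ac)
  also have "\<dots> = (\<Sum>k\<in>UNIV. f $ i * (H $ k $ i * H $ k $ i))"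
    by (simp add: orthonormal_basis_complete[OF assms(1)] if_distrib mult.assoc cong: if_cong)
  also have "\<dots> = f $ i * complex_of_real c"
    by (simp add: square_eq c_def sum_distrib_left)
  finally show ?thesis
    using \<open>c \<noteq> 0\<close> by (simp add: c_def[symmetric])
qed

theorem theorem3p3:
  fixes E :: "'n::finite \<Rightarrow> 'n \<Rightarrow> bool"
    and phi :: "'n \<Rightarrow> complex^'n"
    and lam :: "'n \<Rightarrow> complex"
    and t :: real
  assumes "simple_graph E"
    and "connected_graph E"
    and "\<And>j. laplacian E *v phi j = lam j *s phi j"
    and "\<And>j j'. (\<Sum>k\<in>UNIV. phi j $ k * cnj (phi j' $ k)) = (if j = j' then 1 else 0)"
    and "t \<ge> 0"
  shows "\<forall>f. gW E phi t (gSTFT E phi t f) = f"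
proof
  fix f
  have onb: "orthonormal_basis phi"
    using assms(4) by (simp add: orthonormal_basis_def)
  have "column i (heat_kernel E t) \<noteq> 0" for i
    by (rule column_nonzero_if_eigenvalues_nonzero[OF onb heat_kernel_eigenvector[OF assms(3)]]) simp
  then have "gW E phi t (gSTFT E phi t f) $ i = f $ i" for i
    unfolding gW_def gSTFT_def Let_def vec_lambda_beta
    by (rule windowed_transform_inversion[OF onb Im_heat_kernel_eq_0])
  then show "gW E phi t (gSTFT E phi t f) = f"
    by (simp add: vec_eq_iff)
qed

end
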